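(* Let $\Omega = [a,b)$ be a bounded interval with periodic boundary conditions, let $k \ge 0$ be an integer, let $T_k$ be the space of real-valued trigonometric polynomials on $\Omega$ of degree at most $k$, let $P$ denote the $L^2(\Omega)$-orthogonal projection onto $T_k$, let $\beta \in \mathbb{R}$ and $\tau > 0$. Let $(v, w, \nu, \omega) \colon I \to T_k^4$ (with $I$ an open time interval) be a continuously differentiable solution of the Fourier Galerkin semidiscretization of the hyperbolic approximation of the nonlinear Schrödinger equation, \[ \begin{aligned} v_t &= -\omega_x - \beta P \bigl( (v^2 + w^2) w \bigr), \\ w_t &= \nu_x + \beta P \bigl( (v^2 + w^2) v \bigr), \\ \tau \nu_t &= w_x - \omega, \\ \tau \omega_t &= -v_x + \nu. \end{aligned} \] Then the mass, momentum, and energy \[ \begin{aligned} \mathcal{M} &= \int_\Omega \left( v^2 + w^2 + \tau \nu^2 + \tau \omega^2 \right) \mathrm{d}x, \\ \mathcal{P} &= \int_\Omega \left( v w_x - v_x w + \tau \nu \omega_x - \tau \nu_x \omega \right) \mathrm{d}x, \\ \mathcal{E} &= \int_\Omega \Bigl( 2 \nu v_x - \nu^2 + 2 \omega w_x - \omega^2 - \frac{\beta}{2} (v^2 + w^2)^2 \Bigr) \mathrm{d}x \end{aligned} \] are constant in time along $(v,w,\nu,\omega)$.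
   Context: This system arises from the hyperbolization $\mathrm{i} q^0_t + q^1_x = -\beta |q^0|^2 q^0$, $\mathrm{i} \tau q^1_t - q^0_x = -q^1$ with $q^0 = v + \mathrm{i} w$, $q^1 = \nu + \mathrm{i}\omega$. The semidiscretization is an ODE on the finite-dimensional space $T_k^4$. *)

theory Defs
  imports "HOL-Analysis.Analysis"
begin

text \<open>Real trigonometric polynomials of degree at most k on the periodic interval
  [a,b), written as functions on the real line (their periodic extension).\<close>
definition trig_poly :: "real \<Rightarrow> real \<Rightarrow> nat \<Rightarrow> (real \<Rightarrow> real) set" where
  "trig_poly a b k = {f. \<exists>c s :: nat \<Rightarrow> real. \<forall>x.
      f x = c 0 + (\<Sum>j\<in>{1..k}. c j * cos (2 * pi * real j * (x - a) / (b - a))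
                              + s j * sin (2 * pi * real j * (x - a) / (b - a)))}"

definition L2proj :: "real \<Rightarrow> real \<Rightarrow> nat \<Rightarrow> (real \<Rightarrow> real) \<Rightarrow> (real \<Rightarrow> real)" where
  "L2proj a b k f = (THE g. g \<in> trig_poly a b k \<and>
      (\<forall>h\<in>trig_poly a b k. integral {a..b} (\<lambda>x. (f x - g x) * h x) = 0))"

end

theory Submission
  imports Defs
begin

(* Along the semidiscrete vector field, the time derivative of each density is the x-derivative
   of a periodic function plus multiples of the projection residuals
   (v^2 + w^2) w - P((v^2 + w^2) w) and (v^2 + w^2) v - P((v^2 + w^2) v), each multiplied by an
   element of T_k (v and w for the mass, w_x and v_x for the momentum, v_t and w_t for the energy).
   The first part integrates to zero by periodicity, the residual terms by L2-orthogonality.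

   Differentiating the integrals in time needs regularity jointly in (t, x). It comes from finite
   dimensionality: an element of T_k is the trigonometric interpolant of its values at 2k+1
   equispaced grid points, so the pointwise-in-time hypotheses carry over to every x and to the
   x-derivatives. This interpolation formula and the identification of P with the truncated
   Fourier series both rest on the orthogonality relations of cos (j theta) and sin (j theta),
   which hold alike for the integral over a period and for the sum over the grid. *)

definition trig_sum :: "nat \<Rightarrow> (nat \<Rightarrow> real) \<Rightarrow> (nat \<Rightarrow> real) \<Rightarrow> real \<Rightarrow> real" where
  "trig_sum k c s \<theta> = c 0 + (\<Sum>j\<in>{1..k}. c j * cos (real j * \<theta>) + s j * sin (real j * \<theta>))"

definition period_angle :: "real \<Rightarrow> real \<Rightarrow> real \<Rightarrow> real" where
  "period_angle a b x = 2 * pi * (x - a) / (b - a)"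

lemma trig_poly_iff:
  "f \<in> trig_poly a b k \<longleftrightarrow> (\<exists>c s. f = (\<lambda>x. trig_sum k c s (period_angle a b x)))"
  unfolding trig_poly_def trig_sum_def period_angle_def by (simp add: fun_eq_iff mult_ac)

lemma trig_sum_in_trig_poly: "(\<lambda>x. trig_sum k c s (period_angle a b x)) \<in> trig_poly a b k"
  unfolding trig_poly_iff by blast

lemma trig_sum_cong:
  assumes "\<And>j. j \<le> k \<Longrightarrow> c j = c' j" and "\<And>j. j \<in> {1..k} \<Longrightarrow> s j = s' j"
  shows "trig_sum k c s \<theta> = trig_sum k c' s' \<theta>"
  unfolding trig_sum_def using assms by (intro arg_cong2[where f = "(+)"] sum.cong) auto

lemma trig_sum_linear:
  "(\<Sum>m\<in>M. p m * trig_sum k (c m) (s m) \<theta>)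
     = trig_sum k (\<lambda>j. \<Sum>m\<in>M. p m * c m j) (\<lambda>j. \<Sum>m\<in>M. p m * s m j) \<theta>"
proof -
  have "(\<Sum>m\<in>M. p m * trig_sum k (c m) (s m) \<theta>) = (\<Sum>m\<in>M. p m * c m 0)
      + (\<Sum>m\<in>M. \<Sum>j\<in>{1..k}. p m * c m j * cos (real j * \<theta>) + p m * s m j * sin (real j * \<theta>))"
    by (simp add: trig_sum_def distrib_left sum.distrib sum_distrib_left mult.assoc)
  also have "\<dots> = (\<Sum>m\<in>M. p m * c m 0)
      + (\<Sum>j\<in>{1..k}. \<Sum>m\<in>M. p m * c m j * cos (real j * \<theta>) + p m * s m j * sin (real j * \<theta>))"
    by (subst sum.swap) (rule refl)
  also have "\<dots> = trig_sum k (\<lambda>j. \<Sum>m\<in>M. p m * c m j) (\<lambda>j. \<Sum>m\<in>M. p m * s m j) \<theta>"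
    by (simp add: trig_sum_def sum.distrib sum_distrib_right)
  finally show ?thesis .
qed

lemma trig_poly_lincomb:
  assumes "f \<in> trig_poly a b k" "g \<in> trig_poly a b k"
  shows "(\<lambda>x. p * f x + q * g x) \<in> trig_poly a b k"
proof -
  obtain c s c' s' where f: "f = (\<lambda>x. trig_sum k c s (period_angle a b x))"
    and g: "g = (\<lambda>x. trig_sum k c' s' (period_angle a b x))"
    using assms unfolding trig_poly_iff by blast
  have "p * trig_sum k c s \<theta> + q * trig_sum k c' s' \<theta>
      = trig_sum k (\<lambda>j. p * c j + q * c' j) (\<lambda>j. p * s j + q * s' j) \<theta>" for \<theta>
    by (simp add: trig_sum_def algebra_simps sum.distrib sum_distrib_left)
  then show ?thesis unfolding f g by (simp add: trig_sum_in_trig_poly)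
qed

lemma trig_poly_cmult: "f \<in> trig_poly a b k \<Longrightarrow> (\<lambda>x. c * f x) \<in> trig_poly a b k"
  using trig_poly_lincomb[of f a b k f c 0] by simp

lemma trig_poly_add: "f \<in> trig_poly a b k \<Longrightarrow> g \<in> trig_poly a b k \<Longrightarrow> (\<lambda>x. f x + g x) \<in> trig_poly a b k"
  using trig_poly_lincomb[of f a b k g 1 1] by simp

lemma trig_poly_diff: "f \<in> trig_poly a b k \<Longrightarrow> g \<in> trig_poly a b k \<Longrightarrow> (\<lambda>x. f x - g x) \<in> trig_poly a b k"
  using trig_poly_lincomb[of f a b k g 1 "-1"] by simp

lemma trig_poly_uminus: "f \<in> trig_poly a b k \<Longrightarrow> (\<lambda>x. - f x) \<in> trig_poly a b k"
  using trig_poly_cmult[of f a b k "-1"] by simp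

lemma trig_poly_divide: "f \<in> trig_poly a b k \<Longrightarrow> (\<lambda>x. f x / c) \<in> trig_poly a b k"
  using trig_poly_cmult[of f a b k "1 / c"] by simp

lemma cos_in_trig_poly: "l \<le> k \<Longrightarrow> (\<lambda>x. cos (real l * period_angle a b x)) \<in> trig_poly a b k"
proof -
  assume l: "l \<le> k"
  have "trig_sum k (\<lambda>j. if j = l then 1 else 0) (\<lambda>j. 0) \<theta> = cos (real l * \<theta>)" for \<theta>
  proof -
    have "trig_sum k (\<lambda>j. if j = l then 1 else 0) (\<lambda>j. 0) \<theta>
        = (if l = 0 then 1 else 0) + (\<Sum>j\<in>{1..k}. if j = l then cos (real l * \<theta>) else 0)"
      unfolding trig_sum_def by (intro arg_cong2[where f = "(+)"] sum.cong) auto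
    then show ?thesis using l by (cases "l = 0") auto
  qed
  then show ?thesis using trig_sum_in_trig_poly[of k "\<lambda>j. if j = l then 1 else 0" "\<lambda>j. 0" a b] by simp
qed

lemma sin_in_trig_poly: "l \<le> k \<Longrightarrow> (\<lambda>x. sin (real l * period_angle a b x)) \<in> trig_poly a b k"
proof -
  assume l: "l \<le> k"
  have "trig_sum k (\<lambda>j. 0) (\<lambda>j. if j = l then 1 else 0) \<theta> = sin (real l * \<theta>)" for \<theta>
  proof -
    have "trig_sum k (\<lambda>j. 0) (\<lambda>j. if j = l then 1 else 0) \<theta>
        = 0 + (\<Sum>j\<in>{1..k}. if j = l then sin (real l * \<theta>) else 0)"
      unfolding trig_sum_def by (intro arg_cong2[where f = "(+)"] sum.cong) auto
    then show ?thesis using l by (cases "l = 0") auto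
  qed
  then show ?thesis using trig_sum_in_trig_poly[of k "\<lambda>j. 0" "\<lambda>j. if j = l then 1 else 0" a b] by simp
qed

lemma trig_sum_has_derivative:
  "(trig_sum k c s has_real_derivative trig_sum k (\<lambda>j. s j * real j) (\<lambda>j. - (c j * real j)) \<theta>) (at \<theta>)"
  unfolding trig_sum_def[abs_def]
  by (auto intro!: derivative_eq_intros sum.cong simp: algebra_simps)

lemma period_angle_has_derivative: "(period_angle a b has_real_derivative 2 * pi / (b - a)) (at x)"
proof -
  have eq: "period_angle a b = (\<lambda>x. 2 * pi / (b - a) * (x - a))"
    by (simp add: fun_eq_iff period_angle_def)
  have "((\<lambda>x. 2 * pi / (b - a) * (x - a)) has_real_derivative 2 * pi / (b - a) * (1 - 0)) (at x)"
    by (intro DERIV_cmult DERIV_diff DERIV_ident DERIV_const)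
  then show ?thesis unfolding eq by simp
qed

lemma trig_poly_has_derivative:
  assumes "f \<in> trig_poly a b k"
  obtains f' where "f' \<in> trig_poly a b k" and "\<And>x. (f has_real_derivative f' x) (at x)"
proof -
  obtain c s where f: "f = (\<lambda>x. trig_sum k c s (period_angle a b x))"
    using assms unfolding trig_poly_iff by blast
  let ?f' = "\<lambda>x. 2 * pi / (b - a) * trig_sum k (\<lambda>j. s j * real j) (\<lambda>j. - (c j * real j)) (period_angle a b x)"
  have "(f has_real_derivative ?f' x) (at x)" for x
    unfolding f
    by (rule DERIV_chain2[OF trig_sum_has_derivative period_angle_has_derivative, THEN DERIV_cong])
      (rule mult.commute)
  moreover have "?f' \<in> trig_poly a b k"
    by (intro trig_poly_cmult trig_sum_in_trig_poly)
  ultimately show ?thesis using that by blast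
qed

lemma has_real_derivative_deriv_trig_poly:
  assumes "f \<in> trig_poly a b k"
  shows "(f has_real_derivative deriv f x) (at x)"
proof -
  obtain f' where "\<And>x. (f has_real_derivative f' x) (at x)"
    using trig_poly_has_derivative[OF assms] by blast
  then show ?thesis using DERIV_imp_deriv by metis
qed

lemma deriv_in_trig_poly:
  assumes "f \<in> trig_poly a b k"
  shows "deriv f \<in> trig_poly a b k"
proof -
  obtain f' where "f' \<in> trig_poly a b k" "\<And>x. (f has_real_derivative f' x) (at x)"
    using trig_poly_has_derivative[OF assms] by blast
  then have "deriv f = f'" by (intro ext DERIV_imp_deriv)
  with \<open>f' \<in> trig_poly a b k\<close> show ?thesis by simp
qed

lemma continuous_on_trig_poly: "f \<in> trig_poly a b k \<Longrightarrow> continuous_on S f"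
  by (meson DERIV_isCont continuous_at_imp_continuous_on has_real_derivative_deriv_trig_poly)

lemma trig_poly_periodic:
  assumes "a \<noteq> b" "f \<in> trig_poly a b k"
  shows "f b = f a"
proof -
  obtain c s where "f = (\<lambda>x. trig_sum k c s (period_angle a b x))"
    using assms unfolding trig_poly_iff by blast
  moreover have "cos (real j * (2 * pi)) = 1" "sin (real j * (2 * pi)) = 0" for j
    using cos_int_2pin[of "int j"] sin_int_2pin[of "int j"] by (simp_all add: mult.commute)
  ultimately show ?thesis using assms by (simp add: trig_sum_def period_angle_def)
qed

(* Q f y: a linear rule (integration over [a, b], or summation over grid points) assigns the value
   y to f. It is a relation rather than a function so that integrability stays implicit, as in
   has_integral. *)
locale trig_quadrature =
  fixes Q :: "(real \<Rightarrow> real) \<Rightarrow> real \<Rightarrow> bool" and \<phi> :: "real \<Rightarrow> real" and L :: real and N :: nat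
  assumes Q_add: "Q f y \<Longrightarrow> Q g z \<Longrightarrow> Q (\<lambda>x. f x + g x) (y + z)"
    and Q_cmult: "Q f y \<Longrightarrow> Q (\<lambda>x. c * f x) (c * y)"
    and Q_one: "Q (\<lambda>x. 1) L"
    and Q_cos: "r \<in> \<int> \<Longrightarrow> r \<noteq> 0 \<Longrightarrow> \<bar>r\<bar> \<le> real N \<Longrightarrow> Q (\<lambda>x. cos (r * \<phi> x)) 0"
    and Q_sin: "r \<in> \<int> \<Longrightarrow> r \<noteq> 0 \<Longrightarrow> \<bar>r\<bar> \<le> real N \<Longrightarrow> Q (\<lambda>x. sin (r * \<phi> x)) 0"
begin

lemma Q_zero: "Q (\<lambda>x. 0) 0"
  using Q_cmult[OF Q_one, of 0] by simp

lemma Q_sum: "finite J \<Longrightarrow> (\<And>j. j \<in> J \<Longrightarrow> Q (f j) (y j)) \<Longrightarrow> Q (\<lambda>x. \<Sum>j\<in>J. f j x) (\<Sum>j\<in>J. y j)"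
  by (induction J rule: finite_induct) (auto intro: Q_add Q_zero)

lemma Q_mult_trig_sum:
  assumes "Q g y"
    and "\<And>j. j \<in> {1..k} \<Longrightarrow> Q (\<lambda>x. g x * cos (real j * \<phi> x)) (yc j)"
    and "\<And>j. j \<in> {1..k} \<Longrightarrow> Q (\<lambda>x. g x * sin (real j * \<phi> x)) (ys j)"
  shows "Q (\<lambda>x. g x * trig_sum k c s (\<phi> x)) (c 0 * y + (\<Sum>j\<in>{1..k}. c j * yc j + s j * ys j))"
proof -
  have "Q (\<lambda>x. c 0 * g x + (\<Sum>j\<in>{1..k}. c j * (g x * cos (real j * \<phi> x)) + s j * (g x * sin (real j * \<phi> x))))
      (c 0 * y + (\<Sum>j\<in>{1..k}. c j * yc j + s j * ys j))"
    using assms by (intro Q_add Q_cmult Q_sum) auto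
  then show ?thesis by (simp add: trig_sum_def algebra_simps sum_distrib_left)
qed

lemma Q_cos_multiple: "r \<in> \<int> \<Longrightarrow> \<bar>r\<bar> \<le> real N \<Longrightarrow> Q (\<lambda>x. cos (r * \<phi> x)) (if r = 0 then L else 0)"
  using Q_one Q_cos by (cases "r = 0") auto

lemma Q_sin_multiple: "r \<in> \<int> \<Longrightarrow> \<bar>r\<bar> \<le> real N \<Longrightarrow> Q (\<lambda>x. sin (r * \<phi> x)) 0"
  using Q_zero Q_sin by (cases "r = 0") auto

context
  fixes k j l :: nat
  assumes degree: "2 * k \<le> N" and j: "j \<in> {1..k}" and l: "l \<le> k"
begin

lemma Q_cos_cos: "Q (\<lambda>x. cos (real l * \<phi> x) * cos (real j * \<phi> x)) (if j = l then L / 2 else 0)"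
proof -
  have "Q (\<lambda>x. 1 / 2 * cos ((real l - real j) * \<phi> x) + 1 / 2 * cos ((real l + real j) * \<phi> x))
      (1 / 2 * (if real l - real j = 0 then L else 0) + 1 / 2 * (if real l + real j = 0 then L else 0))"
    using degree j l by (intro Q_add Q_cmult Q_cos_multiple) auto
  moreover have "cos (real l * \<theta>) * cos (real j * \<theta>)
      = 1 / 2 * cos ((real l - real j) * \<theta>) + 1 / 2 * cos ((real l + real j) * \<theta>)" for \<theta>
    unfolding cos_times_cos by (simp add: left_diff_distrib distrib_right)
  ultimately show ?thesis using j by auto
qed

lemma Q_sin_sin: "Q (\<lambda>x. sin (real l * \<phi> x) * sin (real j * \<phi> x)) (if j = l then L / 2 else 0)"
proof -
  have "Q (\<lambda>x. 1 / 2 * cos ((real l - real j) * \<phi> x) + (- 1 / 2) * cos ((real l + real j) * \<phi> x))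
      (1 / 2 * (if real l - real j = 0 then L else 0) + (- 1 / 2) * (if real l + real j = 0 then L else 0))"
    using degree j l by (intro Q_add Q_cmult Q_cos_multiple) auto
  moreover have "sin (real l * \<theta>) * sin (real j * \<theta>)
      = 1 / 2 * cos ((real l - real j) * \<theta>) + (- 1 / 2) * cos ((real l + real j) * \<theta>)" for \<theta>
    unfolding sin_times_sin by (simp add: left_diff_distrib distrib_right diff_divide_distrib)
  ultimately show ?thesis using j by auto
qed

lemma Q_cos_sin: "Q (\<lambda>x. cos (real l * \<phi> x) * sin (real j * \<phi> x)) 0"
proof -
  have "Q (\<lambda>x. 1 / 2 * sin ((real l + real j) * \<phi> x) + (- 1 / 2) * sin ((real l - real j) * \<phi> x))
      (1 / 2 * 0 + (- 1 / 2) * 0)"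
    using degree j l by (intro Q_add Q_cmult Q_sin_multiple) auto
  moreover have "cos (real l * \<theta>) * sin (real j * \<theta>)
      = 1 / 2 * sin ((real l + real j) * \<theta>) + (- 1 / 2) * sin ((real l - real j) * \<theta>)" for \<theta>
    unfolding cos_times_sin by (simp add: left_diff_distrib distrib_right diff_divide_distrib)
  ultimately show ?thesis by simp
qed

lemma Q_sin_cos: "Q (\<lambda>x. sin (real l * \<phi> x) * cos (real j * \<phi> x)) 0"
proof -
  have "Q (\<lambda>x. 1 / 2 * sin ((real l + real j) * \<phi> x) + 1 / 2 * sin ((real l - real j) * \<phi> x))
      (1 / 2 * 0 + 1 / 2 * 0)"
    using degree j l by (intro Q_add Q_cmult Q_sin_multiple) auto
  moreover have "sin (real l * \<theta>) * cos (real j * \<theta>)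
      = 1 / 2 * sin ((real l + real j) * \<theta>) + 1 / 2 * sin ((real l - real j) * \<theta>)" for \<theta>
    unfolding sin_times_cos by (simp add: left_diff_distrib distrib_right add_divide_distrib)
  ultimately show ?thesis by simp
qed

end

lemma Q_cos_trig_sum:
  assumes "2 * k \<le> N" "l \<le> k"
  shows "Q (\<lambda>x. cos (real l * \<phi> x) * trig_sum k c s (\<phi> x)) (L * c l / (if l = 0 then 1 else 2))"
proof -
  have "Q (\<lambda>x. cos (real l * \<phi> x) * trig_sum k c s (\<phi> x))
      (c 0 * (if real l = 0 then L else 0) + (\<Sum>j\<in>{1..k}. c j * (if j = l then L / 2 else 0) + s j * 0))"
    using assms by (intro Q_mult_trig_sum Q_cos_multiple Q_cos_cos Q_cos_sin) auto
  moreover have "c 0 * (if real l = 0 then L else 0)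
      + (\<Sum>j\<in>{1..k}. c j * (if j = l then L / 2 else 0) + s j * 0) = L * c l / (if l = 0 then 1 else 2)"
  proof -
    have "(\<Sum>j\<in>{1..k}. c j * (if j = l then L / 2 else 0) + s j * 0)
        = (\<Sum>j\<in>{1..k}. if j = l then c l * (L / 2) else 0)"
      by (rule sum.cong) auto
    then show ?thesis using assms(2) by (cases "l = 0") auto
  qed
  ultimately show ?thesis by (simp only:)
qed

lemma Q_sin_trig_sum:
  assumes "2 * k \<le> N" "l \<in> {1..k}"
  shows "Q (\<lambda>x. sin (real l * \<phi> x) * trig_sum k c s (\<phi> x)) (L * s l / 2)"
proof -
  have "Q (\<lambda>x. sin (real l * \<phi> x) * trig_sum k c s (\<phi> x))
      (c 0 * 0 + (\<Sum>j\<in>{1..k}. c j * 0 + s j * (if j = l then L / 2 else 0)))"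
    using assms by (intro Q_mult_trig_sum Q_sin_multiple Q_sin_cos Q_sin_sin) auto
  moreover have "c 0 * 0 + (\<Sum>j\<in>{1..k}. c j * 0 + s j * (if j = l then L / 2 else 0)) = L * s l / 2"
  proof -
    have "(\<Sum>j\<in>{1..k}. c j * 0 + s j * (if j = l then L / 2 else 0))
        = (\<Sum>j\<in>{1..k}. if j = l then s l * (L / 2) else 0)"
      by (rule sum.cong) auto
    then show ?thesis using assms(2) by simp
  qed
  ultimately show ?thesis by (simp only:)
qed

end

lemma has_integral_real_derivative:
  assumes "a \<le> b" and "\<And>x. (F has_real_derivative f x) (at x)"
  shows "(f has_integral F b - F a) {a..b}"
  using assms by (intro fundamental_theorem_of_calculus)
    (auto simp: has_real_derivative_iff_has_vector_derivative[symmetric] intro: has_field_derivative_at_within)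

lemma trig_quadrature_integral:
  assumes "a < b"
  shows "trig_quadrature (\<lambda>f y. (f has_integral y) {a..b}) (period_angle a b) (b - a) N"
proof
  fix r :: real assume r: "r \<in> \<int>" "r \<noteq> 0"
  define \<omega> where "\<omega> = r * (2 * pi / (b - a))"
  have \<omega>: "\<omega> \<noteq> 0" using r assms by (simp add: \<omega>_def)
  have angle: "r * period_angle a b b = 2 * pi * r" "r * period_angle a b a = 0"
    using assms by (simp_all add: period_angle_def)
  have "((\<lambda>x. sin (r * period_angle a b x) / \<omega>) has_real_derivative cos (r * period_angle a b x)) (at x)" for x
    using \<omega> by (auto intro!: derivative_eq_intros period_angle_has_derivative simp: \<omega>_def)
  from has_integral_real_derivative[of a b, OF _ this] show "((\<lambda>x. cos (r * period_angle a b x)) has_integral 0) {a..b}"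
    using assms r by (simp add: angle sin_integer_2pi)
  have "((\<lambda>x. - cos (r * period_angle a b x) / \<omega>) has_real_derivative sin (r * period_angle a b x)) (at x)" for x
    using \<omega> by (auto intro!: derivative_eq_intros period_angle_has_derivative simp: \<omega>_def)
  from has_integral_real_derivative[of a b, OF _ this] show "((\<lambda>x. sin (r * period_angle a b x)) has_integral 0) {a..b}"
    using assms r by (simp add: angle cos_integer_2pi)
next
  show "((\<lambda>x. 1) has_integral b - a) {a..b}"
    using has_integral_const_real[of "1 :: real" a b] assms by simp
qed (auto intro: has_integral_add has_integral_mult_right)

definition grid_point :: "real \<Rightarrow> real \<Rightarrow> nat \<Rightarrow> nat \<Rightarrow> real" where
  "grid_point a b n m = a + real m * (b - a) / real n"

lemma period_angle_grid_point: "a \<noteq> b \<Longrightarrow> period_angle a b (grid_point a b n m) = 2 * pi * real m / real n"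
  by (simp add: period_angle_def grid_point_def)

lemma sum_cis_grid:
  assumes "r \<in> \<int>" "r \<noteq> 0" "\<bar>r\<bar> < real n"
  shows "(\<Sum>m<n. cis (r * (2 * pi * real m / real n))) = 0"
proof -
  have n: "n > 0" using assms by linarith
  define z where "z = cis (2 * pi * r / real n)"
  have "z ^ n = cis (2 * pi * r)"
    using n by (simp add: z_def Complex.DeMoivre)
  also have "\<dots> = 1"
    using assms(1) by (rule cis_multiple_2pi)
  finally have "z ^ n = 1" .
  moreover have "z \<noteq> 1"
  proof
    assume "z = 1"
    then have "cos (2 * pi * r / real n) = 1" by (simp add: z_def complex_eq_iff)
    then obtain j :: int where "2 * pi * r / real n = of_int j * 2 * pi"
      unfolding cos_one_2pi_int by blast
    then have "r = of_int j * real n" using n by (simp add: field_simps)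
    then show False using assms by (cases "j = 0") (auto simp: abs_mult)
  qed
  moreover have "cis (r * (2 * pi * real m / real n)) = z ^ m" for m
    by (simp add: z_def Complex.DeMoivre algebra_simps)
  ultimately show ?thesis by (simp add: sum_gp_strict)
qed

lemma trig_quadrature_grid:
  assumes "a \<noteq> b" "0 < n"
  shows "trig_quadrature (\<lambda>f y. (\<Sum>m<n. f (grid_point a b n m)) = y) (period_angle a b) (real n) (n - 1)"
proof
  fix r :: real assume "r \<in> \<int>" "r \<noteq> 0" "\<bar>r\<bar> \<le> real (n - 1)"
  then have "(\<Sum>m<n. cis (r * (2 * pi * real m / real n))) = 0"
    using assms by (intro sum_cis_grid) auto
  moreover have "period_angle a b (grid_point a b n m) = 2 * pi * real m / real n" for m
    using assms(1) by (rule period_angle_grid_point)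
  ultimately show "(\<Sum>m<n. cos (r * period_angle a b (grid_point a b n m))) = 0"
    and "(\<Sum>m<n. sin (r * period_angle a b (grid_point a b n m))) = 0"
    by (simp_all only: cis.sel[symmetric] Re_sum[symmetric] Im_sum[symmetric] zero_complex.sel)
qed (auto simp: sum.distrib sum_distrib_left)

definition fourier_cos :: "real \<Rightarrow> real \<Rightarrow> (real \<Rightarrow> real) \<Rightarrow> nat \<Rightarrow> real" where
  "fourier_cos a b f l = (if l = 0 then 1 else 2) / (b - a)
     * integral {a..b} (\<lambda>x. cos (real l * period_angle a b x) * f x)"

definition fourier_sin :: "real \<Rightarrow> real \<Rightarrow> (real \<Rightarrow> real) \<Rightarrow> nat \<Rightarrow> real" where
  "fourier_sin a b f l = 2 / (b - a) * integral {a..b} (\<lambda>x. sin (real l * period_angle a b x) * f x)"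

definition fourier_sum :: "real \<Rightarrow> real \<Rightarrow> nat \<Rightarrow> (real \<Rightarrow> real) \<Rightarrow> real \<Rightarrow> real" where
  "fourier_sum a b k f = (\<lambda>x. trig_sum k (fourier_cos a b f) (fourier_sin a b f) (period_angle a b x))"

context
  fixes a b :: real and k :: nat and f :: "real \<Rightarrow> real"
  assumes ab: "a < b" and f: "continuous_on {a..b} f"
begin

interpretation integral: trig_quadrature "\<lambda>f y. (f has_integral y) {a..b}" "period_angle a b" "b - a" "2 * k"
  using ab by (rule trig_quadrature_integral)

lemma has_integral_cos_fourier_sum:
  assumes "l \<le> k"
  shows "((\<lambda>x. cos (real l * period_angle a b x) * fourier_sum a b k f x) has_integral
      integral {a..b} (\<lambda>x. cos (real l * period_angle a b x) * f x)) {a..b}"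
  using integral.Q_cos_trig_sum[OF _ assms, of "fourier_cos a b f" "fourier_sin a b f"] ab
  by (simp add: fourier_sum_def fourier_cos_def)

lemma has_integral_sin_fourier_sum:
  assumes "l \<in> {1..k}"
  shows "((\<lambda>x. sin (real l * period_angle a b x) * fourier_sum a b k f x) has_integral
      integral {a..b} (\<lambda>x. sin (real l * period_angle a b x) * f x)) {a..b}"
  using integral.Q_sin_trig_sum[OF _ assms, of "fourier_cos a b f" "fourier_sin a b f"] ab
  by (simp add: fourier_sum_def fourier_sin_def)

lemma fourier_sum_orthogonal:
  assumes "h \<in> trig_poly a b k"
  shows "((\<lambda>x. (f x - fourier_sum a b k f x) * h x) has_integral 0) {a..b}"
proof -
  obtain c s where h: "h = (\<lambda>x. trig_sum k c s (period_angle a b x))"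
    using assms unfolding trig_poly_iff by blast
  have integral_f: "((\<lambda>x. g x * f x) has_integral integral {a..b} (\<lambda>x. g x * f x)) {a..b}"
    if "g \<in> trig_poly a b k" for g
    using that f by (intro integrable_integral integrable_continuous_interval continuous_intros)
      (auto intro: continuous_on_trig_poly)
  have cos: "((\<lambda>x. (f x - fourier_sum a b k f x) * cos (real l * period_angle a b x)) has_integral 0) {a..b}"
    if "l \<le> k" for l
    using has_integral_diff[OF integral_f[OF cos_in_trig_poly[OF that]] has_integral_cos_fourier_sum[OF that]]
    by (simp add: algebra_simps)
  have sin: "((\<lambda>x. (f x - fourier_sum a b k f x) * sin (real l * period_angle a b x)) has_integral 0) {a..b}"
    if "l \<in> {1..k}" for l
  proof -
    have "l \<le> k" using that by simp
    from has_integral_diff[OF integral_f[OF sin_in_trig_poly[OF this]] has_integral_sin_fourier_sum[OF that]]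
    show ?thesis by (simp add: algebra_simps)
  qed
  have "((\<lambda>x. (f x - fourier_sum a b k f x) * trig_sum k c s (period_angle a b x)) has_integral
      c 0 * 0 + (\<Sum>j\<in>{1..k}. c j * 0 + s j * 0)) {a..b}"
    using cos[of 0] by (intro integral.Q_mult_trig_sum cos sin) auto
  then show ?thesis unfolding h by simp
qed

lemma fourier_sum_unique:
  assumes g: "g \<in> trig_poly a b k"
    and orth: "\<forall>h\<in>trig_poly a b k. integral {a..b} (\<lambda>x. (f x - g x) * h x) = 0"
  shows "g = fourier_sum a b k f"
proof -
  obtain c s where g_eq: "g = (\<lambda>x. trig_sum k c s (period_angle a b x))"
    using g unfolding trig_poly_iff by blast
  have same_integral: "integral {a..b} (\<lambda>x. h x * f x) = integral {a..b} (\<lambda>x. h x * g x)"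
    if "h \<in> trig_poly a b k" for h
  proof -
    have "continuous_on {a..b} (\<lambda>x. h x * f x)"
      by (intro continuous_intros f continuous_on_trig_poly[OF that])
    moreover have "continuous_on {a..b} (\<lambda>x. h x * g x)"
      by (intro continuous_intros continuous_on_trig_poly[OF that] continuous_on_trig_poly[OF g])
    ultimately have "integral {a..b} (\<lambda>x. h x * f x) - integral {a..b} (\<lambda>x. h x * g x)
        = integral {a..b} (\<lambda>x. (f x - g x) * h x)"
      by (simp add: integral_diff[symmetric] integrable_continuous_interval algebra_simps)
    then show ?thesis using orth that by simp
  qed
  have "fourier_cos a b f l = c l" if "l \<le> k" for l
    using integral.Q_cos_trig_sum[OF _ that, of c s] ab same_integral[OF cos_in_trig_poly[OF that]]
    by (auto simp: fourier_cos_def g_eq integral_unique)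
  moreover have "fourier_sin a b f l = s l" if "l \<in> {1..k}" for l
    using integral.Q_sin_trig_sum[OF _ that, of c s] ab that same_integral[OF sin_in_trig_poly[of l k]]
    by (auto simp: fourier_sin_def g_eq integral_unique field_simps)
  ultimately show ?thesis
    unfolding g_eq fourier_sum_def by (intro ext trig_sum_cong) auto
qed

lemma L2proj_eq_fourier_sum: "L2proj a b k f = fourier_sum a b k f"
  unfolding L2proj_def
proof (rule the_equality)
  show "fourier_sum a b k f \<in> trig_poly a b k \<and>
      (\<forall>h\<in>trig_poly a b k. integral {a..b} (\<lambda>x. (f x - fourier_sum a b k f x) * h x) = 0)"
    using fourier_sum_orthogonal integral_unique unfolding fourier_sum_def
    by (auto intro: trig_sum_in_trig_poly)
qed (use fourier_sum_unique in blast)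

lemma L2proj_in_trig_poly: "L2proj a b k f \<in> trig_poly a b k"
  unfolding L2proj_eq_fourier_sum fourier_sum_def by (rule trig_sum_in_trig_poly)

lemma L2proj_orthogonal:
  "h \<in> trig_poly a b k \<Longrightarrow> ((\<lambda>x. (f x - L2proj a b k f x) * h x) has_integral 0) {a..b}"
  unfolding L2proj_eq_fourier_sum by (rule fourier_sum_orthogonal)

end

(* Shifted Dirichlet kernels: the cardinal functions of trigonometric interpolation on the grid. *)
definition grid_basis :: "real \<Rightarrow> real \<Rightarrow> nat \<Rightarrow> nat \<Rightarrow> nat \<Rightarrow> real \<Rightarrow> real" where
  "grid_basis a b n k m x = trig_sum k
     (\<lambda>j. (if j = 0 then 1 else 2) / real n * cos (real j * period_angle a b (grid_point a b n m)))
     (\<lambda>j. 2 / real n * sin (real j * period_angle a b (grid_point a b n m))) (period_angle a b x)"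

lemma grid_basis_in_trig_poly: "grid_basis a b n k m \<in> trig_poly a b k"
  unfolding grid_basis_def[abs_def] by (rule trig_sum_in_trig_poly)

lemma trig_poly_grid_interpolation:
  assumes ab: "a \<noteq> b" and n: "2 * k < n" and f: "f \<in> trig_poly a b k"
  shows "f x = (\<Sum>m<n. f (grid_point a b n m) * grid_basis a b n k m x)"
proof -
  interpret grid: trig_quadrature "\<lambda>f y. (\<Sum>m<n. f (grid_point a b n m)) = y" "period_angle a b" "real n" "n - 1"
    using ab n by (intro trig_quadrature_grid) auto
  obtain c s where f_eq: "f = (\<lambda>x. trig_sum k c s (period_angle a b x))"
    using f unfolding trig_poly_iff by blast
  let ?\<theta> = "\<lambda>m. period_angle a b (grid_point a b n m)"
  have "c l = (\<Sum>m<n. f (grid_point a b n m) * ((if l = 0 then 1 else 2) / real n * cos (real l * ?\<theta> m)))"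
    if "l \<le> k" for l
  proof -
    have "(\<Sum>m<n. cos (real l * ?\<theta> m) * f (grid_point a b n m)) = real n * c l / (if l = 0 then 1 else 2)"
      using grid.Q_cos_trig_sum[of k l c s] n that by (simp add: f_eq)
    moreover have "(\<Sum>m<n. f (grid_point a b n m) * ((if l = 0 then 1 else 2) / real n * cos (real l * ?\<theta> m)))
        = (if l = 0 then 1 else 2) / real n * (\<Sum>m<n. cos (real l * ?\<theta> m) * f (grid_point a b n m))"
      by (simp add: sum_distrib_left mult_ac)
    ultimately show ?thesis using n by simp
  qed
  moreover have "s l = (\<Sum>m<n. f (grid_point a b n m) * (2 / real n * sin (real l * ?\<theta> m)))"
    if "l \<in> {1..k}" for l
  proof -
    have "(\<Sum>m<n. sin (real l * ?\<theta> m) * f (grid_point a b n m)) = real n * s l / 2"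
      using grid.Q_sin_trig_sum[of k l c s] n that by (simp add: f_eq)
    moreover have "(\<Sum>m<n. f (grid_point a b n m) * (2 / real n * sin (real l * ?\<theta> m)))
        = 2 / real n * (\<Sum>m<n. sin (real l * ?\<theta> m) * f (grid_point a b n m))"
      by (simp add: sum_distrib_left mult_ac)
    ultimately show ?thesis using n by (simp add: field_simps)
  qed
  ultimately show ?thesis
    unfolding f_eq grid_basis_def trig_sum_linear by (intro trig_sum_cong) auto
qed

lemma deriv_grid_interpolation:
  assumes "a \<noteq> b" "2 * k < n" "f \<in> trig_poly a b k"
  shows "deriv f x = (\<Sum>m<n. f (grid_point a b n m) * deriv (grid_basis a b n k m) x)"
proof -
  have "((\<lambda>x. \<Sum>m<n. f (grid_point a b n m) * grid_basis a b n k m x) has_real_derivative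
      (\<Sum>m<n. f (grid_point a b n m) * deriv (grid_basis a b n k m) x)) (at x)"
    by (intro DERIV_sum DERIV_cmult has_real_derivative_deriv_trig_poly[OF grid_basis_in_trig_poly])
  moreover have "f = (\<lambda>x. \<Sum>m<n. f (grid_point a b n m) * grid_basis a b n k m x)"
    using trig_poly_grid_interpolation[OF assms] by (rule ext)
  ultimately show ?thesis by (simp add: DERIV_imp_deriv)
qed

lemma continuous_on_trig_poly_family:
  assumes ab: "a \<noteq> b" and F: "\<And>t. t \<in> I \<Longrightarrow> F t \<in> trig_poly a b k"
    and cont: "\<And>x. continuous_on I (\<lambda>t. F t x)"
  shows "continuous_on (I \<times> X) (\<lambda>p. F (fst p) (snd p))"
    and "continuous_on (I \<times> X) (\<lambda>p. deriv (F (fst p)) (snd p))"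
proof -
  define n where "n = 2 * k + 1"
  have n: "2 * k < n" by (simp add: n_def)
  have node: "continuous_on (I \<times> X) (\<lambda>p. F (fst p) (grid_point a b n m))" for m
    by (rule continuous_on_compose2[OF cont continuous_on_fst[OF continuous_on_id]]) auto
  have "continuous_on (I \<times> X) (\<lambda>p. g (snd p))" if "g \<in> trig_poly a b k" for g
    by (rule continuous_on_compose2[OF continuous_on_trig_poly[OF that] continuous_on_snd[OF continuous_on_id]])
      auto
  then have basis: "continuous_on (I \<times> X) (\<lambda>p. grid_basis a b n k m (snd p))"
    "continuous_on (I \<times> X) (\<lambda>p. deriv (grid_basis a b n k m) (snd p))" for m
    by (simp_all add: grid_basis_in_trig_poly deriv_in_trig_poly)
  have "continuous_on (I \<times> X) (\<lambda>p. \<Sum>m<n. F (fst p) (grid_point a b n m) * grid_basis a b n k m (snd p))"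
    by (intro continuous_intros node basis)
  then show "continuous_on (I \<times> X) (\<lambda>p. F (fst p) (snd p))"
    by (rule continuous_on_eq) (use trig_poly_grid_interpolation[OF ab n F] in auto)
  have "continuous_on (I \<times> X) (\<lambda>p. \<Sum>m<n. F (fst p) (grid_point a b n m) * deriv (grid_basis a b n k m) (snd p))"
    by (intro continuous_intros node basis)
  then show "continuous_on (I \<times> X) (\<lambda>p. deriv (F (fst p)) (snd p))"
    by (rule continuous_on_eq) (use deriv_grid_interpolation[OF ab n F] in auto)
qed

lemma has_real_derivative_deriv_trig_poly_family:
  assumes ab: "a \<noteq> b" and I: "open I" "t \<in> I"
    and F: "\<And>s. s \<in> I \<Longrightarrow> F s \<in> trig_poly a b k" and F': "F' \<in> trig_poly a b k"
    and deriv_F: "\<And>x. ((\<lambda>s. F s x) has_real_derivative F' x) (at t)"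
  shows "((\<lambda>s. deriv (F s) x) has_real_derivative deriv F' x) (at t)"
proof -
  define n where "n = 2 * k + 1"
  have n: "2 * k < n" by (simp add: n_def)
  have "((\<lambda>s. \<Sum>m<n. F s (grid_point a b n m) * deriv (grid_basis a b n k m) x) has_real_derivative
      (\<Sum>m<n. F' (grid_point a b n m) * deriv (grid_basis a b n k m) x)) (at t)"
    by (intro DERIV_sum DERIV_cmult_right deriv_F)
  then have "((\<lambda>s. \<Sum>m<n. F s (grid_point a b n m) * deriv (grid_basis a b n k m) x) has_real_derivative
      deriv F' x) (at t)"
    using deriv_grid_interpolation[OF ab n F'] by simp
  then show ?thesis
    by (rule has_field_derivative_transform_within_open[OF _ I])
      (use deriv_grid_interpolation[OF ab n F] in auto)
qed

lemma parametric_integral_constant: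
  fixes F F' :: "real \<Rightarrow> real \<Rightarrow> real"
  assumes I: "convex I"
    and deriv_F: "\<And>t x. t \<in> I \<Longrightarrow> ((\<lambda>s. F s x) has_real_derivative F' t x) (at t)"
    and integrable_F: "\<And>t. t \<in> I \<Longrightarrow> F t integrable_on {a..b}"
    and cont_F': "continuous_on (I \<times> {a..b}) (\<lambda>p. F' (fst p) (snd p))"
    and zero: "\<And>t. t \<in> I \<Longrightarrow> integral {a..b} (F' t) = 0"
    and t: "t1 \<in> I" "t2 \<in> I"
  shows "integral {a..b} (F t1) = integral {a..b} (F t2)"
proof -
  have "((\<lambda>t. integral (cbox a b) (F t)) has_field_derivative integral (cbox a b) (F' t)) (at t within I)"
    if "t \<in> I" for t
    using that I deriv_F integrable_F cont_F'
    by (intro leibniz_rule_field_derivative)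
      (auto simp: cbox_interval split_def intro: has_field_derivative_at_within)
  then have "((\<lambda>t. integral {a..b} (F t)) has_field_derivative 0) (at t within I)" if "t \<in> I" for t
    using zero that by (simp add: cbox_interval)
  then obtain c where "\<forall>t\<in>I. integral {a..b} (F t) = c"
    using has_field_derivative_zero_constant[OF I] by blast
  then show ?thesis using t by simp
qed

lemma has_integral_zero_periodic_primitive:
  assumes "a \<le> b" and P: "\<And>x. (P has_real_derivative p x) (at x)" and "P b = P a"
    and "(g has_integral 0) {a..b}" "(h has_integral 0) {a..b}"
    and "\<And>x. G x = p x + c * g x + d * h x"
  shows "(G has_integral 0) {a..b}"
proof -
  have "(p has_integral 0) {a..b}"
    using has_integral_real_derivative[OF \<open>a \<le> b\<close> P] \<open>P b = P a\<close> by simp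
  then have "((\<lambda>x. p x + c * g x + d * h x) has_integral 0 + c * 0 + d * 0) {a..b}"
    using assms by (intro has_integral_add has_integral_mult_right)
  moreover have "G = (\<lambda>x. p x + c * g x + d * h x)"
    using assms by auto
  ultimately show ?thesis by simp
qed

locale galerkin_state =
  fixes a b \<beta> \<tau> :: real and k :: nat and v w \<nu> \<omega> v_t w_t \<nu>_t \<omega>_t :: "real \<Rightarrow> real"
  assumes ab: "a < b" and tau: "\<tau> \<noteq> 0"
    and in_trig_poly: "v \<in> trig_poly a b k" "w \<in> trig_poly a b k" "\<nu> \<in> trig_poly a b k" "\<omega> \<in> trig_poly a b k"
    and v_t_eq: "\<And>x. v_t x = - deriv \<omega> x - \<beta> * L2proj a b k (\<lambda>y. ((v y)^2 + (w y)^2) * w y) x"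
    and w_t_eq: "\<And>x. w_t x = deriv \<nu> x + \<beta> * L2proj a b k (\<lambda>y. ((v y)^2 + (w y)^2) * v y) x"
    and \<nu>_t_eq: "\<And>x. \<nu>_t x = (deriv w x - \<omega> x) / \<tau>"
    and \<omega>_t_eq: "\<And>x. \<omega>_t x = (- deriv v x + \<nu> x) / \<tau>"
begin

abbreviation "P_w \<equiv> L2proj a b k (\<lambda>y. ((v y)^2 + (w y)^2) * w y)"
abbreviation "P_v \<equiv> L2proj a b k (\<lambda>y. ((v y)^2 + (w y)^2) * v y)"

lemmas continuous_on_fields = in_trig_poly[THEN continuous_on_trig_poly]

lemma projections_in_trig_poly: "P_w \<in> trig_poly a b k" "P_v \<in> trig_poly a b k"
  using ab by (auto intro!: L2proj_in_trig_poly continuous_on_mult continuous_on_add continuous_on_power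
      continuous_on_fields)

lemma residuals_orthogonal:
  assumes "h \<in> trig_poly a b k"
  shows "((\<lambda>x. (((v x)^2 + (w x)^2) * w x - P_w x) * h x) has_integral 0) {a..b}"
    and "((\<lambda>x. (((v x)^2 + (w x)^2) * v x - P_v x) * h x) has_integral 0) {a..b}"
  using ab assms by (auto intro!: L2proj_orthogonal continuous_on_mult continuous_on_add continuous_on_power
      continuous_on_fields)

lemma rates_in_trig_poly: "v_t \<in> trig_poly a b k" "w_t \<in> trig_poly a b k"
  "\<nu>_t \<in> trig_poly a b k" "\<omega>_t \<in> trig_poly a b k"
proof -
  have "v_t = (\<lambda>x. - deriv \<omega> x - \<beta> * P_w x)" "w_t = (\<lambda>x. deriv \<nu> x + \<beta> * P_v x)"
    "\<nu>_t = (\<lambda>x. (deriv w x - \<omega> x) / \<tau>)" "\<omega>_t = (\<lambda>x. (- deriv v x + \<nu> x) / \<tau>)"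
    using v_t_eq w_t_eq \<nu>_t_eq \<omega>_t_eq by auto
  then show "v_t \<in> trig_poly a b k" "w_t \<in> trig_poly a b k" "\<nu>_t \<in> trig_poly a b k" "\<omega>_t \<in> trig_poly a b k"
    using in_trig_poly projections_in_trig_poly
    by (auto intro!: trig_poly_add trig_poly_diff trig_poly_uminus trig_poly_cmult trig_poly_divide
        deriv_in_trig_poly)
qed

lemmas has_real_derivative_fields =
  in_trig_poly[THEN has_real_derivative_deriv_trig_poly] rates_in_trig_poly[THEN has_real_derivative_deriv_trig_poly]
lemmas periodic_fields =
  in_trig_poly[THEN trig_poly_periodic[rotated]] rates_in_trig_poly[THEN trig_poly_periodic[rotated]]

lemma mass_rate_has_integral_zero:
  "((\<lambda>x. 2 * v x * v_t x + 2 * w x * w_t x + \<tau> * (2 * \<nu> x * \<nu>_t x) + \<tau> * (2 * \<omega> x * \<omega>_t x))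
     has_integral 0) {a..b}"
proof (rule has_integral_zero_periodic_primitive[where P = "\<lambda>x. 2 * (w x * \<nu> x - v x * \<omega> x)"
    and c = "2 * \<beta>" and d = "- 2 * \<beta>", OF _ _ _ residuals_orthogonal(1)[OF in_trig_poly(1)]
    residuals_orthogonal(2)[OF in_trig_poly(2)]])
  show "((\<lambda>x. 2 * (w x * \<nu> x - v x * \<omega> x)) has_real_derivative
      2 * (deriv w x * \<nu> x + w x * deriv \<nu> x - (deriv v x * \<omega> x + v x * deriv \<omega> x))) (at x)" for x
    by (auto intro!: derivative_eq_intros has_real_derivative_fields)
  fix x
  have "\<tau> * (2 * \<nu> x * \<nu>_t x) = 2 * \<nu> x * (deriv w x - \<omega> x)"
    "\<tau> * (2 * \<omega> x * \<omega>_t x) = 2 * \<omega> x * (- deriv v x + \<nu> x)"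
    using tau by (simp_all add: \<nu>_t_eq \<omega>_t_eq)
  then show "2 * v x * v_t x + 2 * w x * w_t x + \<tau> * (2 * \<nu> x * \<nu>_t x) + \<tau> * (2 * \<omega> x * \<omega>_t x)
    = 2 * (deriv w x * \<nu> x + w x * deriv \<nu> x - (deriv v x * \<omega> x + v x * deriv \<omega> x))
      + 2 * \<beta> * ((((v x)^2 + (w x)^2) * w x - P_w x) * v x)
      + - 2 * \<beta> * ((((v x)^2 + (w x)^2) * v x - P_v x) * w x)"
    by (simp add: v_t_eq w_t_eq algebra_simps power2_eq_square)
qed (use ab periodic_fields in auto)

lemma momentum_rate_has_integral_zero:
  "((\<lambda>x. v_t x * deriv w x + v x * deriv w_t x - (deriv v_t x * w x + deriv v x * w_t x)
      + \<tau> * (\<nu>_t x * deriv \<omega> x + \<nu> x * deriv \<omega>_t x) - \<tau> * (deriv \<nu>_t x * \<omega> x + deriv \<nu> x * \<omega>_t x))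
     has_integral 0) {a..b}"
proof (rule has_integral_zero_periodic_primitive[where
      P = "\<lambda>x. v x * w_t x - v_t x * w x + \<tau> * (\<nu> x * \<omega>_t x - \<nu>_t x * \<omega> x)
        - \<beta> * ((v x)^2 + (w x)^2)^2 / 2 - (\<omega> x)^2 - (\<nu> x)^2"
      and c = "2 * \<beta>" and d = "2 * \<beta>",
      OF _ _ _ residuals_orthogonal(1)[OF deriv_in_trig_poly[OF in_trig_poly(2)]]
      residuals_orthogonal(2)[OF deriv_in_trig_poly[OF in_trig_poly(1)]]])
  show "((\<lambda>x. v x * w_t x - v_t x * w x + \<tau> * (\<nu> x * \<omega>_t x - \<nu>_t x * \<omega> x)
        - \<beta> * ((v x)^2 + (w x)^2)^2 / 2 - (\<omega> x)^2 - (\<nu> x)^2) has_real_derivative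
      deriv v x * w_t x + v x * deriv w_t x - (deriv v_t x * w x + v_t x * deriv w x)
      + \<tau> * (deriv \<nu> x * \<omega>_t x + \<nu> x * deriv \<omega>_t x - (deriv \<nu>_t x * \<omega> x + \<nu>_t x * deriv \<omega> x))
      - \<beta> * ((v x)^2 + (w x)^2) * (2 * v x * deriv v x + 2 * w x * deriv w x)
      - 2 * \<omega> x * deriv \<omega> x - 2 * \<nu> x * deriv \<nu> x) (at x)" for x
    by (rule derivative_eq_intros has_real_derivative_fields refl | simp add: algebra_simps power2_eq_square)+
  fix x
  show "v_t x * deriv w x + v x * deriv w_t x - (deriv v_t x * w x + deriv v x * w_t x)
      + \<tau> * (\<nu>_t x * deriv \<omega> x + \<nu> x * deriv \<omega>_t x) - \<tau> * (deriv \<nu>_t x * \<omega> x + deriv \<nu> x * \<omega>_t x)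
    = deriv v x * w_t x + v x * deriv w_t x - (deriv v_t x * w x + v_t x * deriv w x)
      + \<tau> * (deriv \<nu> x * \<omega>_t x + \<nu> x * deriv \<omega>_t x - (deriv \<nu>_t x * \<omega> x + \<nu>_t x * deriv \<omega> x))
      - \<beta> * ((v x)^2 + (w x)^2) * (2 * v x * deriv v x + 2 * w x * deriv w x)
      - 2 * \<omega> x * deriv \<omega> x - 2 * \<nu> x * deriv \<nu> x
      + 2 * \<beta> * ((((v x)^2 + (w x)^2) * w x - P_w x) * deriv w x)
      + 2 * \<beta> * ((((v x)^2 + (w x)^2) * v x - P_v x) * deriv v x)"
    unfolding v_t_eq w_t_eq \<nu>_t_eq \<omega>_t_eq using tau by (simp add: field_simps power2_eq_square)
qed (use ab periodic_fields in auto)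

lemma energy_rate_has_integral_zero:
  "((\<lambda>x. 2 * (\<nu>_t x * deriv v x + \<nu> x * deriv v_t x) - 2 * \<nu> x * \<nu>_t x
      + 2 * (\<omega>_t x * deriv w x + \<omega> x * deriv w_t x) - 2 * \<omega> x * \<omega>_t x
      - \<beta> / 2 * (2 * ((v x)^2 + (w x)^2) * (2 * v x * v_t x + 2 * w x * w_t x))) has_integral 0) {a..b}"
proof (rule has_integral_zero_periodic_primitive[where P = "\<lambda>x. 2 * (\<nu> x * v_t x + \<omega> x * w_t x)"
      and c = "- 2 * \<beta>" and d = "- 2 * \<beta>",
      OF _ _ _ residuals_orthogonal(2)[OF rates_in_trig_poly(1)] residuals_orthogonal(1)[OF rates_in_trig_poly(2)]])
  show "((\<lambda>x. 2 * (\<nu> x * v_t x + \<omega> x * w_t x)) has_real_derivative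
      2 * (deriv \<nu> x * v_t x + \<nu> x * deriv v_t x + (deriv \<omega> x * w_t x + \<omega> x * deriv w_t x))) (at x)" for x
    by (auto intro!: derivative_eq_intros has_real_derivative_fields)
  fix x
  have "\<nu>_t x * (deriv v x - \<nu> x) + \<omega>_t x * (deriv w x - \<omega> x) = 0"
    unfolding \<nu>_t_eq \<omega>_t_eq using tau by (simp add: field_simps)
  then show "2 * (\<nu>_t x * deriv v x + \<nu> x * deriv v_t x) - 2 * \<nu> x * \<nu>_t x
      + 2 * (\<omega>_t x * deriv w x + \<omega> x * deriv w_t x) - 2 * \<omega> x * \<omega>_t x
      - \<beta> / 2 * (2 * ((v x)^2 + (w x)^2) * (2 * v x * v_t x + 2 * w x * w_t x))
    = 2 * (deriv \<nu> x * v_t x + \<nu> x * deriv v_t x + (deriv \<omega> x * w_t x + \<omega> x * deriv w_t x))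
      + - 2 * \<beta> * ((((v x)^2 + (w x)^2) * v x - P_v x) * v_t x)
      + - 2 * \<beta> * ((((v x)^2 + (w x)^2) * w x - P_w x) * w_t x)"
    by (simp add: v_t_eq w_t_eq algebra_simps power2_eq_square)
qed (use ab periodic_fields in auto)

end

locale trig_poly_flow =
  fixes a b :: real and k :: nat and I :: "real set" and F F_t :: "real \<Rightarrow> real \<Rightarrow> real"
  assumes ab: "a \<noteq> b" and I: "open I"
    and in_trig_poly: "\<And>t. t \<in> I \<Longrightarrow> F t \<in> trig_poly a b k"
    and rate_in_trig_poly: "\<And>t. t \<in> I \<Longrightarrow> F_t t \<in> trig_poly a b k"
    and has_time_derivative: "\<And>t x. t \<in> I \<Longrightarrow> ((\<lambda>s. F s x) has_real_derivative F_t t x) (at t)"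
    and continuous_rate: "\<And>x. continuous_on I (\<lambda>t. F_t t x)"
begin

lemma continuous_on_joint:
  "continuous_on (I \<times> X) (\<lambda>p. F (fst p) (snd p))"
  "continuous_on (I \<times> X) (\<lambda>p. deriv (F (fst p)) (snd p))"
  "continuous_on (I \<times> X) (\<lambda>p. F_t (fst p) (snd p))"
  "continuous_on (I \<times> X) (\<lambda>p. deriv (F_t (fst p)) (snd p))"
proof -
  have "continuous_on I (\<lambda>t. F t x)" for x
    using has_time_derivative by (intro continuous_at_imp_continuous_on ballI DERIV_isCont) auto
  then show "continuous_on (I \<times> X) (\<lambda>p. F (fst p) (snd p))"
    "continuous_on (I \<times> X) (\<lambda>p. deriv (F (fst p)) (snd p))"
    using continuous_on_trig_poly_family[of a b I F k] ab in_trig_poly by blast+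
  show "continuous_on (I \<times> X) (\<lambda>p. F_t (fst p) (snd p))"
    "continuous_on (I \<times> X) (\<lambda>p. deriv (F_t (fst p)) (snd p))"
    using continuous_on_trig_poly_family[of a b I F_t k] ab rate_in_trig_poly continuous_rate by blast+
qed

lemma has_time_derivative_deriv:
  "t \<in> I \<Longrightarrow> ((\<lambda>s. deriv (F s) x) has_real_derivative deriv (F_t t) x) (at t)"
  by (rule has_real_derivative_deriv_trig_poly_family[OF ab I _ in_trig_poly rate_in_trig_poly has_time_derivative])

end

locale galerkin_solution =
  fixes a b \<beta> \<tau> :: real and k :: nat and I :: "real set" and v w \<nu> \<omega> :: "real \<Rightarrow> real \<Rightarrow> real"
  assumes ab: "a < b" and tau: "\<tau> \<noteq> 0" and I: "open I" "convex I"
    and in_trig_poly: "\<And>t. t \<in> I \<Longrightarrow> v t \<in> trig_poly a b k" "\<And>t. t \<in> I \<Longrightarrow> w t \<in> trig_poly a b k"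
      "\<And>t. t \<in> I \<Longrightarrow> \<nu> t \<in> trig_poly a b k" "\<And>t. t \<in> I \<Longrightarrow> \<omega> t \<in> trig_poly a b k"
    and ode_v: "\<And>t x. t \<in> I \<Longrightarrow> ((\<lambda>s. v s x) has_real_derivative
        (- deriv (\<omega> t) x - \<beta> * L2proj a b k (\<lambda>y. ((v t y)^2 + (w t y)^2) * w t y) x)) (at t)"
    and ode_w: "\<And>t x. t \<in> I \<Longrightarrow> ((\<lambda>s. w s x) has_real_derivative
        (deriv (\<nu> t) x + \<beta> * L2proj a b k (\<lambda>y. ((v t y)^2 + (w t y)^2) * v t y) x)) (at t)"
    and ode_\<nu>: "\<And>t x. t \<in> I \<Longrightarrow> ((\<lambda>s. \<nu> s x) has_real_derivative ((deriv (w t) x - \<omega> t x) / \<tau>)) (at t)"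
    and ode_\<omega>: "\<And>t x. t \<in> I \<Longrightarrow> ((\<lambda>s. \<omega> s x) has_real_derivative ((- deriv (v t) x + \<nu> t x) / \<tau>)) (at t)"
    and C1: "\<And>x. continuous_on I (\<lambda>t. deriv (\<lambda>s. v s x) t)" "\<And>x. continuous_on I (\<lambda>t. deriv (\<lambda>s. w s x) t)"
      "\<And>x. continuous_on I (\<lambda>t. deriv (\<lambda>s. \<nu> s x) t)" "\<And>x. continuous_on I (\<lambda>t. deriv (\<lambda>s. \<omega> s x) t)"
begin

definition v_t :: "real \<Rightarrow> real \<Rightarrow> real" where
  "v_t t x = - deriv (\<omega> t) x - \<beta> * L2proj a b k (\<lambda>y. ((v t y)^2 + (w t y)^2) * w t y) x"
definition w_t :: "real \<Rightarrow> real \<Rightarrow> real" where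
  "w_t t x = deriv (\<nu> t) x + \<beta> * L2proj a b k (\<lambda>y. ((v t y)^2 + (w t y)^2) * v t y) x"
definition \<nu>_t :: "real \<Rightarrow> real \<Rightarrow> real" where
  "\<nu>_t t x = (deriv (w t) x - \<omega> t x) / \<tau>"
definition \<omega>_t :: "real \<Rightarrow> real \<Rightarrow> real" where
  "\<omega>_t t x = (- deriv (v t) x + \<nu> t x) / \<tau>"

lemma galerkin_state_at: "t \<in> I \<Longrightarrow> galerkin_state a b \<beta> \<tau> k (v t) (w t) (\<nu> t) (\<omega> t) (v_t t) (w_t t) (\<nu>_t t) (\<omega>_t t)"
  using ab tau in_trig_poly by unfold_locales (simp_all add: v_t_def w_t_def \<nu>_t_def \<omega>_t_def)

lemma has_time_derivative:
  assumes "t \<in> I"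
  shows "((\<lambda>s. v s x) has_real_derivative v_t t x) (at t)" "((\<lambda>s. w s x) has_real_derivative w_t t x) (at t)"
    "((\<lambda>s. \<nu> s x) has_real_derivative \<nu>_t t x) (at t)" "((\<lambda>s. \<omega> s x) has_real_derivative \<omega>_t t x) (at t)"
  using ode_v ode_w ode_\<nu> ode_\<omega> assms by (simp_all add: v_t_def w_t_def \<nu>_t_def \<omega>_t_def)

lemma continuous_rates:
  "continuous_on I (\<lambda>t. v_t t x)" "continuous_on I (\<lambda>t. w_t t x)"
  "continuous_on I (\<lambda>t. \<nu>_t t x)" "continuous_on I (\<lambda>t. \<omega>_t t x)"
  using C1 has_time_derivative DERIV_imp_deriv by (metis (no_types, lifting) continuous_on_eq)+

lemmas rates_in_trig_poly = galerkin_state.rates_in_trig_poly[OF galerkin_state_at]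

sublocale flow_v: trig_poly_flow a b k I v v_t
  using ab I in_trig_poly(1) rates_in_trig_poly(1) has_time_derivative(1) continuous_rates(1)
  by unfold_locales auto

sublocale flow_w: trig_poly_flow a b k I w w_t
  using ab I in_trig_poly(2) rates_in_trig_poly(2) has_time_derivative(2) continuous_rates(2)
  by unfold_locales auto

sublocale flow_\<nu>: trig_poly_flow a b k I \<nu> \<nu>_t
  using ab I in_trig_poly(3) rates_in_trig_poly(3) has_time_derivative(3) continuous_rates(3)
  by unfold_locales auto

sublocale flow_\<omega>: trig_poly_flow a b k I \<omega> \<omega>_t
  using ab I in_trig_poly(4) rates_in_trig_poly(4) has_time_derivative(4) continuous_rates(4)
  by unfold_locales auto

lemmas joint_continuity = flow_v.continuous_on_joint flow_w.continuous_on_joint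
  flow_\<nu>.continuous_on_joint flow_\<omega>.continuous_on_joint
lemmas time_derivatives = has_time_derivative flow_v.has_time_derivative_deriv
  flow_w.has_time_derivative_deriv flow_\<nu>.has_time_derivative_deriv flow_\<omega>.has_time_derivative_deriv

lemma continuous_on_fields_at:
  assumes "t \<in> I"
  shows "continuous_on S (v t)" "continuous_on S (w t)" "continuous_on S (\<nu> t)" "continuous_on S (\<omega> t)"
    "continuous_on S (deriv (v t))" "continuous_on S (deriv (w t))"
    "continuous_on S (deriv (\<nu> t))" "continuous_on S (deriv (\<omega> t))"
  using in_trig_poly[OF assms] by (auto intro: continuous_on_trig_poly deriv_in_trig_poly)

lemma mass_conserved:
  assumes "t1 \<in> I" "t2 \<in> I"
  shows "integral {a..b} (\<lambda>x. (v t1 x)^2 + (w t1 x)^2 + \<tau> * (\<nu> t1 x)^2 + \<tau> * (\<omega> t1 x)^2)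
    = integral {a..b} (\<lambda>x. (v t2 x)^2 + (w t2 x)^2 + \<tau> * (\<nu> t2 x)^2 + \<tau> * (\<omega> t2 x)^2)"
proof (rule parametric_integral_constant[OF I(2) _ _ _ _ assms, where
      F' = "\<lambda>t x. 2 * v t x * v_t t x + 2 * w t x * w_t t x + \<tau> * (2 * \<nu> t x * \<nu>_t t x) + \<tau> * (2 * \<omega> t x * \<omega>_t t x)"])
  fix t x assume t: "t \<in> I"
  show "((\<lambda>s. (v s x)^2 + (w s x)^2 + \<tau> * (\<nu> s x)^2 + \<tau> * (\<omega> s x)^2) has_real_derivative
      2 * v t x * v_t t x + 2 * w t x * w_t t x + \<tau> * (2 * \<nu> t x * \<nu>_t t x) + \<tau> * (2 * \<omega> t x * \<omega>_t t x)) (at t)"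
    using t by (auto intro!: derivative_eq_intros time_derivatives)
next
  fix t assume t: "t \<in> I"
  show "(\<lambda>x. (v t x)^2 + (w t x)^2 + \<tau> * (\<nu> t x)^2 + \<tau> * (\<omega> t x)^2) integrable_on {a..b}"
    using t by (intro integrable_continuous_interval continuous_intros continuous_on_fields_at)
  show "integral {a..b} (\<lambda>x. 2 * v t x * v_t t x + 2 * w t x * w_t t x
      + \<tau> * (2 * \<nu> t x * \<nu>_t t x) + \<tau> * (2 * \<omega> t x * \<omega>_t t x)) = 0"
    using galerkin_state.mass_rate_has_integral_zero[OF galerkin_state_at[OF t]] by (rule integral_unique)
qed (intro continuous_intros joint_continuity)

lemma momentum_conserved:
  assumes "t1 \<in> I" "t2 \<in> I"
  shows "integral {a..b} (\<lambda>x. v t1 x * deriv (w t1) x - deriv (v t1) x * w t1 x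
          + \<tau> * \<nu> t1 x * deriv (\<omega> t1) x - \<tau> * deriv (\<nu> t1) x * \<omega> t1 x)
    = integral {a..b} (\<lambda>x. v t2 x * deriv (w t2) x - deriv (v t2) x * w t2 x
          + \<tau> * \<nu> t2 x * deriv (\<omega> t2) x - \<tau> * deriv (\<nu> t2) x * \<omega> t2 x)"
proof (rule parametric_integral_constant[OF I(2) _ _ _ _ assms, where
      F' = "\<lambda>t x. v_t t x * deriv (w t) x + v t x * deriv (w_t t) x - (deriv (v_t t) x * w t x + deriv (v t) x * w_t t x)
        + \<tau> * (\<nu>_t t x * deriv (\<omega> t) x + \<nu> t x * deriv (\<omega>_t t) x)
        - \<tau> * (deriv (\<nu>_t t) x * \<omega> t x + deriv (\<nu> t) x * \<omega>_t t x)"])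
  fix t x assume t: "t \<in> I"
  show "((\<lambda>s. v s x * deriv (w s) x - deriv (v s) x * w s x
          + \<tau> * \<nu> s x * deriv (\<omega> s) x - \<tau> * deriv (\<nu> s) x * \<omega> s x) has_real_derivative
      v_t t x * deriv (w t) x + v t x * deriv (w_t t) x - (deriv (v_t t) x * w t x + deriv (v t) x * w_t t x)
        + \<tau> * (\<nu>_t t x * deriv (\<omega> t) x + \<nu> t x * deriv (\<omega>_t t) x)
        - \<tau> * (deriv (\<nu>_t t) x * \<omega> t x + deriv (\<nu> t) x * \<omega>_t t x)) (at t)"
    using t by (auto intro!: derivative_eq_intros time_derivatives simp: algebra_simps)
next
  fix t assume t: "t \<in> I"
  show "(\<lambda>x. v t x * deriv (w t) x - deriv (v t) x * w t x
          + \<tau> * \<nu> t x * deriv (\<omega> t) x - \<tau> * deriv (\<nu> t) x * \<omega> t x) integrable_on {a..b}"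
    using t by (intro integrable_continuous_interval continuous_intros continuous_on_fields_at)
  show "integral {a..b} (\<lambda>x. v_t t x * deriv (w t) x + v t x * deriv (w_t t) x
        - (deriv (v_t t) x * w t x + deriv (v t) x * w_t t x)
        + \<tau> * (\<nu>_t t x * deriv (\<omega> t) x + \<nu> t x * deriv (\<omega>_t t) x)
        - \<tau> * (deriv (\<nu>_t t) x * \<omega> t x + deriv (\<nu> t) x * \<omega>_t t x)) = 0"
    using galerkin_state.momentum_rate_has_integral_zero[OF galerkin_state_at[OF t]] by (rule integral_unique)
qed (intro continuous_intros joint_continuity)

lemma energy_conserved:
  assumes "t1 \<in> I" "t2 \<in> I"
  shows "integral {a..b} (\<lambda>x. 2 * \<nu> t1 x * deriv (v t1) x - (\<nu> t1 x)^2
          + 2 * \<omega> t1 x * deriv (w t1) x - (\<omega> t1 x)^2 - \<beta> / 2 * ((v t1 x)^2 + (w t1 x)^2)^2)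
    = integral {a..b} (\<lambda>x. 2 * \<nu> t2 x * deriv (v t2) x - (\<nu> t2 x)^2
          + 2 * \<omega> t2 x * deriv (w t2) x - (\<omega> t2 x)^2 - \<beta> / 2 * ((v t2 x)^2 + (w t2 x)^2)^2)"
proof (rule parametric_integral_constant[OF I(2) _ _ _ _ assms, where
      F' = "\<lambda>t x. 2 * (\<nu>_t t x * deriv (v t) x + \<nu> t x * deriv (v_t t) x) - 2 * \<nu> t x * \<nu>_t t x
        + 2 * (\<omega>_t t x * deriv (w t) x + \<omega> t x * deriv (w_t t) x) - 2 * \<omega> t x * \<omega>_t t x
        - \<beta> / 2 * (2 * ((v t x)^2 + (w t x)^2) * (2 * v t x * v_t t x + 2 * w t x * w_t t x))"])
  fix t x assume t: "t \<in> I"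
  show "((\<lambda>s. 2 * \<nu> s x * deriv (v s) x - (\<nu> s x)^2 + 2 * \<omega> s x * deriv (w s) x - (\<omega> s x)^2
        - \<beta> / 2 * ((v s x)^2 + (w s x)^2)^2) has_real_derivative
      2 * (\<nu>_t t x * deriv (v t) x + \<nu> t x * deriv (v_t t) x) - 2 * \<nu> t x * \<nu>_t t x
        + 2 * (\<omega>_t t x * deriv (w t) x + \<omega> t x * deriv (w_t t) x) - 2 * \<omega> t x * \<omega>_t t x
        - \<beta> / 2 * (2 * ((v t x)^2 + (w t x)^2) * (2 * v t x * v_t t x + 2 * w t x * w_t t x))) (at t)"
    using t by (auto intro!: derivative_eq_intros time_derivatives simp: algebra_simps)
next
  fix t assume t: "t \<in> I"
  show "(\<lambda>x. 2 * \<nu> t x * deriv (v t) x - (\<nu> t x)^2 + 2 * \<omega> t x * deriv (w t) x - (\<omega> t x)^2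
      - \<beta> / 2 * ((v t x)^2 + (w t x)^2)^2) integrable_on {a..b}"
    using t by (intro integrable_continuous_interval continuous_intros continuous_on_fields_at)
  show "integral {a..b} (\<lambda>x. 2 * (\<nu>_t t x * deriv (v t) x + \<nu> t x * deriv (v_t t) x) - 2 * \<nu> t x * \<nu>_t t x
        + 2 * (\<omega>_t t x * deriv (w t) x + \<omega> t x * deriv (w_t t) x) - 2 * \<omega> t x * \<omega>_t t x
        - \<beta> / 2 * (2 * ((v t x)^2 + (w t x)^2) * (2 * v t x * v_t t x + 2 * w t x * w_t t x))) = 0"
    using galerkin_state.energy_rate_has_integral_zero[OF galerkin_state_at[OF t]] by (rule integral_unique)
qed (intro continuous_intros joint_continuity)

end

theorem theorem6p1:
  fixes a b \<beta> \<tau> :: real and k :: nat and I :: "real set"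
    and v w \<nu> \<omega> :: "real \<Rightarrow> real \<Rightarrow> real"
  assumes ab: "a < b" and tau: "\<tau> > 0"
    and I: "open I" "is_interval I" "I \<noteq> {}"
    and inT: "\<forall>t\<in>I. v t \<in> trig_poly a b k \<and> w t \<in> trig_poly a b k
                    \<and> \<nu> t \<in> trig_poly a b k \<and> \<omega> t \<in> trig_poly a b k"
    and ode_v: "\<forall>t\<in>I. \<forall>x. ((\<lambda>s. v s x) has_real_derivative
        (- deriv (\<omega> t) x - \<beta> * L2proj a b k (\<lambda>y. ((v t y)^2 + (w t y)^2) * w t y) x)) (at t)"
    and ode_w: "\<forall>t\<in>I. \<forall>x. ((\<lambda>s. w s x) has_real_derivative
        (deriv (\<nu> t) x + \<beta> * L2proj a b k (\<lambda>y. ((v t y)^2 + (w t y)^2) * v t y) x)) (at t)"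
    and ode_nu: "\<forall>t\<in>I. \<forall>x. ((\<lambda>s. \<nu> s x) has_real_derivative
        ((deriv (w t) x - \<omega> t x) / \<tau>)) (at t)"
    and ode_om: "\<forall>t\<in>I. \<forall>x. ((\<lambda>s. \<omega> s x) has_real_derivative
        ((- deriv (v t) x + \<nu> t x) / \<tau>)) (at t)"
    and C1: "\<forall>x. continuous_on I (\<lambda>t. deriv (\<lambda>s. v s x) t)
               \<and> continuous_on I (\<lambda>t. deriv (\<lambda>s. w s x) t)
               \<and> continuous_on I (\<lambda>t. deriv (\<lambda>s. \<nu> s x) t)
               \<and> continuous_on I (\<lambda>t. deriv (\<lambda>s. \<omega> s x) t)"
  shows "\<forall>t1\<in>I. \<forall>t2\<in>I.
      integral {a..b} (\<lambda>x. (v t1 x)^2 + (w t1 x)^2 + \<tau> * (\<nu> t1 x)^2 + \<tau> * (\<omega> t1 x)^2)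
    = integral {a..b} (\<lambda>x. (v t2 x)^2 + (w t2 x)^2 + \<tau> * (\<nu> t2 x)^2 + \<tau> * (\<omega> t2 x)^2)
    \<and> integral {a..b} (\<lambda>x. v t1 x * deriv (w t1) x - deriv (v t1) x * w t1 x
          + \<tau> * \<nu> t1 x * deriv (\<omega> t1) x - \<tau> * deriv (\<nu> t1) x * \<omega> t1 x)
    = integral {a..b} (\<lambda>x. v t2 x * deriv (w t2) x - deriv (v t2) x * w t2 x
          + \<tau> * \<nu> t2 x * deriv (\<omega> t2) x - \<tau> * deriv (\<nu> t2) x * \<omega> t2 x)
    \<and> integral {a..b} (\<lambda>x. 2 * \<nu> t1 x * deriv (v t1) x - (\<nu> t1 x)^2
          + 2 * \<omega> t1 x * deriv (w t1) x - (\<omega> t1 x)^2 - \<beta> / 2 * ((v t1 x)^2 + (w t1 x)^2)^2)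
    = integral {a..b} (\<lambda>x. 2 * \<nu> t2 x * deriv (v t2) x - (\<nu> t2 x)^2
          + 2 * \<omega> t2 x * deriv (w t2) x - (\<omega> t2 x)^2 - \<beta> / 2 * ((v t2 x)^2 + (w t2 x)^2)^2)"
proof -
  interpret galerkin_solution a b \<beta> \<tau> k I v w \<nu> \<omega>
    using ab tau I(1,2) inT ode_v ode_w ode_nu ode_om C1
    by unfold_locales (auto simp: is_interval_convex)
  show ?thesis
    using mass_conserved momentum_conserved energy_conserved by blast
qed

end
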